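(* Suppose there exists a $\pi_p$-bounded element $\xi\in G$. Then $H^0_{\mathrm{ct}}(G,\pi_p)=L^p(G,V)^G=\{0\}$.
   Context: $G$ is a locally compact second countable group with left Haar measure; $(\pi_0,V)$ is a continuous representation of $G$ on a separable Banach space $V$; for $p>1$, $\pi_p$ is the representation on the Bochner space $L^p(G,V)$ given by $(\pi(g)f)(h)=\pi_0(g)(f(hg))$, and $L^p(G,V)^G$ its space of $G$-invariant vectors. An element $\xi$ is $\pi_p$-bounded if $\{\xi^n:n>0\}$ is not relatively compact and $\sup_{n>0}|||\pi(\xi^n)|||_{L^p(G,V)}<\infty$. *)

theory Defs
  imports "HOL-Analysis.Analysis"
begin

text \<open>The group G is written additively (class topological_group_add; group_add is NOT
  assumed commutative). Hence g h in the paper is g + h, and xi^n is gpow xi n.\<close>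

definition gpow :: "'g::group_add \<Rightarrow> nat \<Rightarrow> 'g" where
  "gpow \<xi> n = (((+) \<xi>) ^^ n) 0"

definition left_haar_measure :: "'g::{topological_group_add} measure \<Rightarrow> bool" where
  "left_haar_measure M \<longleftrightarrow>
     sets M = sets borel \<and> space M = UNIV \<and>
     (\<forall>g A. A \<in> sets borel \<longrightarrow> emeasure M ((+) g ` A) = emeasure M A) \<and>
     (\<forall>K. compact K \<longrightarrow> emeasure M K < \<infinity>) \<and>
     (\<forall>U. open U \<and> U \<noteq> {} \<longrightarrow> emeasure M U > 0)"

definition continuous_rep :: "('g::{topological_group_add} \<Rightarrow> 'v::banach \<Rightarrow> 'v) \<Rightarrow> bool" where
  "continuous_rep \<pi>0 \<longleftrightarrow>
     (\<forall>g. bounded_linear (\<pi>0 g)) \<and>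
     \<pi>0 0 = id \<and>
     (\<forall>g h. \<pi>0 (g + h) = \<pi>0 g \<circ> \<pi>0 h) \<and>
     (\<forall>v. continuous_on UNIV (\<lambda>g. \<pi>0 g v))"

text \<open>Representatives of elements of the Bochner space L^p(G,V).\<close>
definition Lp_space :: "'g measure \<Rightarrow> real \<Rightarrow> ('g \<Rightarrow> 'v::banach) set" where
  "Lp_space M p = {f. f \<in> borel_measurable M \<and> integrable M (\<lambda>h. norm (f h) powr p)}"

definition Lp_norm_pow :: "'g measure \<Rightarrow> real \<Rightarrow> ('g \<Rightarrow> 'v::real_normed_vector) \<Rightarrow> ennreal" where
  "Lp_norm_pow M p f = (\<integral>\<^sup>+ h. ennreal (norm (f h) powr p) \<partial>M)"

definition pi_p :: "('g::group_add \<Rightarrow> 'v \<Rightarrow> 'v) \<Rightarrow> 'g \<Rightarrow> ('g \<Rightarrow> 'v) \<Rightarrow> ('g \<Rightarrow> 'v)" where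
  "pi_p \<pi>0 g f = (\<lambda>h. \<pi>0 g (f (h + g)))"

definition Lp_opnorm_pow :: "'g::group_add measure \<Rightarrow> real \<Rightarrow> ('g \<Rightarrow> 'v::banach \<Rightarrow> 'v) \<Rightarrow> 'g \<Rightarrow> ennreal" where
  "Lp_opnorm_pow M p \<pi>0 g =
     (SUP f \<in> {f \<in> Lp_space M p. Lp_norm_pow M p f \<le> 1}. Lp_norm_pow M p (pi_p \<pi>0 g f))"

definition pi_p_bounded :: "'g::topological_group_add measure \<Rightarrow> real \<Rightarrow> ('g \<Rightarrow> 'v::banach \<Rightarrow> 'v) \<Rightarrow> 'g \<Rightarrow> bool" where
  "pi_p_bounded M p \<pi>0 \<xi> \<longleftrightarrow>
     \<not> compact (closure {gpow \<xi> n | n. n > 0}) \<and>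
     (SUP n \<in> {0<..}. Lp_opnorm_pow M p \<pi>0 (gpow \<xi> n)) < \<infinity>"

text \<open>G-invariant vectors of L^p(G,V) (= H^0_ct(G, pi_p)); equality in L^p is a.e. equality.\<close>
definition Lp_invariants :: "'g::group_add measure \<Rightarrow> real \<Rightarrow> ('g \<Rightarrow> 'v::banach \<Rightarrow> 'v) \<Rightarrow> ('g \<Rightarrow> 'v) set" where
  "Lp_invariants M p \<pi>0 =
     {f \<in> Lp_space M p. \<forall>g. AE h in M. pi_p \<pi>0 g f h = f h}"

end

theory Submission
  imports Defs
begin

text \<open>
  Let f be an invariant vector and s a bound for the p-th powers of the operator norms of the
  operators pi(xi^n). Testing pi(xi^n) against suitably normalised truncations of f itself
  shows that the mass of |f|^p on a set A is at most s times its mass on the right translate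
  A xi^n. Since the powers of xi leave every compact set, for compact A and B some translate
  A xi^n misses B, so the mass on A is at most s times the mass outside B. Exhausting G by
  compact sets makes the latter tend to zero, hence f vanishes almost everywhere.
\<close>

definition Lp_mass :: "'a measure \<Rightarrow> real \<Rightarrow> ('a \<Rightarrow> 'v::real_normed_vector) \<Rightarrow> 'a set \<Rightarrow> real" where
  "Lp_mass M p f S = (LINT x|M. indicator S x * norm (f x) powr p)"

lemma Lp_mass_nonneg: "Lp_mass M p f S \<ge> 0"
  unfolding Lp_mass_def by (intro integral_nonneg_AE) auto

lemma integrable_Lp_mass:
  assumes "f \<in> Lp_space M p" and "S \<in> sets M"
  shows "integrable M (\<lambda>x. indicator S x * norm (f x) powr p)"
  using integrable_mult_indicator[OF assms(2), of "\<lambda>x. norm (f x) powr p"] assms(1)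
  by (simp add: Lp_space_def)

lemma Lp_mass_mono:
  assumes "f \<in> Lp_space M p" and "A \<in> sets M" and "B \<in> sets M" and "A \<subseteq> B"
  shows "Lp_mass M p f A \<le> Lp_mass M p f B"
  unfolding Lp_mass_def
  using integrable_Lp_mass[OF assms(1,2)] integrable_Lp_mass[OF assms(1,3)] assms(4)
  by (intro integral_mono) (auto simp: indicator_def)

lemma Lp_mass_Compl:
  assumes "f \<in> Lp_space M p" and "B \<in> sets M" and "space M = UNIV"
  shows "Lp_mass M p f (- B) = Lp_mass M p f UNIV - Lp_mass M p f B"
proof -
  have "Lp_mass M p f (- B)
      = (LINT x|M. indicator UNIV x * norm (f x) powr p - indicator B x * norm (f x) powr p)"
    unfolding Lp_mass_def by (intro Bochner_Integration.integral_cong) (auto simp: indicator_def)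
  also have "\<dots> = Lp_mass M p f UNIV - Lp_mass M p f B"
    unfolding Lp_mass_def using assms sets.top[of M]
    by (intro Bochner_Integration.integral_diff integrable_Lp_mass) auto
  finally show ?thesis .
qed

lemma Lp_mass_exhaustion_tendsto:
  assumes f: "f \<in> Lp_space M p"
    and K: "\<And>j. K j \<in> sets M" "incseq K" "(\<Union>j. K j) = UNIV"
  shows "(\<lambda>j. Lp_mass M p f (K j)) \<longlonglongrightarrow> Lp_mass M p f UNIV"
proof -
  define w where "w x = norm (f x) powr p" for x
  have w: "integrable M w" using f unfolding Lp_space_def w_def[abs_def] by blast
  have "(\<lambda>j. LINT x|M. indicator (K j) x * w x) \<longlonglongrightarrow> (LINT x|M. w x)"
  proof (rule integral_dominated_convergence[where w="\<lambda>x. norm (w x)"])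
    show "AE x in M. (\<lambda>j. indicator (K j) x * w x) \<longlonglongrightarrow> w x"
    proof (rule AE_I2)
      fix x
      obtain j0 where "x \<in> K j0" using K(3) by auto
      then have "\<forall>j\<ge>j0. indicator (K j) x * w x = w x"
        using K(2) by (auto simp: incseq_def indicator_def)
      then show "(\<lambda>j. indicator (K j) x * w x) \<longlonglongrightarrow> w x"
        by (intro tendsto_eventually) (auto simp: eventually_sequentially)
    qed
  qed (use w K(1) in \<open>auto simp: indicator_def\<close>)
  then show ?thesis unfolding Lp_mass_def w_def by simp
qed

lemma norm_scaled_indicator_powr:
  fixes f :: "'a \<Rightarrow> 'v::real_normed_vector"
  assumes "p > 0"
  shows "norm (c *\<^sub>R (indicator S x *\<^sub>R f x)) powr p
       = \<bar>c\<bar> powr p * (indicator S x * norm (f x) powr p)"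
  using assms by (cases "x \<in> S") (auto simp: powr_mult)

lemma Lp_norm_pow_scaled_indicator:
  fixes f :: "'a \<Rightarrow> 'v::banach"
  assumes "f \<in> Lp_space M p" and "p > 0" and "S \<in> sets M"
  shows "Lp_norm_pow M p (\<lambda>x. c *\<^sub>R (indicator S x *\<^sub>R f x)) = ennreal (\<bar>c\<bar> powr p * Lp_mass M p f S)"
proof -
  have "Lp_norm_pow M p (\<lambda>x. c *\<^sub>R (indicator S x *\<^sub>R f x))
      = (\<integral>\<^sup>+ x. ennreal (\<bar>c\<bar> powr p * (indicator S x * norm (f x) powr p)) \<partial>M)"
    unfolding Lp_norm_pow_def norm_scaled_indicator_powr[OF assms(2)] ..
  also have "\<dots> = ennreal (LINT x|M. \<bar>c\<bar> powr p * (indicator S x * norm (f x) powr p))"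
    using integrable_Lp_mass[OF assms(1,3)] by (intro nn_integral_eq_integral) auto
  finally show ?thesis by (simp add: Lp_mass_def)
qed

lemma Lp_space_scaled_indicator:
  fixes f :: "'a \<Rightarrow> 'v::{banach,second_countable_topology}"
  assumes "f \<in> Lp_space M p" and "p > 0" and "S \<in> sets M"
  shows "(\<lambda>x. c *\<^sub>R (indicator S x *\<^sub>R f x)) \<in> Lp_space M p"
proof -
  have "integrable M (\<lambda>x. norm (c *\<^sub>R (indicator S x *\<^sub>R f x)) powr p)"
    unfolding norm_scaled_indicator_powr[OF assms(2)]
    by (rule integrable_mult_right[OF integrable_Lp_mass[OF assms(1,3)]])
  then show ?thesis
    using assms unfolding Lp_space_def by auto
qed

lemma le_mult_if_normalized_le:
  fixes a b s :: real
  assumes "a \<ge> 0" and "b \<ge> 0" and "s \<ge> 0"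
    and normalized: "\<And>t. t > 0 \<Longrightarrow> t * b \<le> 1 \<Longrightarrow> t * a \<le> s"
  shows "a \<le> s * b"
proof (cases "b = 0")
  case True
  show ?thesis
  proof (rule ccontr)
    assume "\<not> a \<le> s * b"
    then have "a > 0" using True by simp
    then show False using normalized[of "(s + 1) / a"] True assms(3) by simp
  qed
next
  case False
  then have "b > 0" using assms(2) by simp
  then show ?thesis using normalized[of "1 / b"] by (simp add: field_simps)
qed

text \<open>
  The test vector is f truncated to the translate A g and scaled to norm at most 1; by
  invariance \<pi>(g) maps it to the same scaling of f truncated to A.
\<close>
lemma Lp_mass_le_translate:
  fixes f :: "'g::group_add \<Rightarrow> 'v::{banach,second_countable_topology}"
  assumes f: "f \<in> Lp_space M p" and p: "p > 0"
    and A: "A \<in> sets M" and Ag: "(\<lambda>a. a + g) ` A \<in> sets M"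
    and lin: "linear (\<pi>0 g)"
    and inv: "AE h in M. \<pi>0 g (f (h + g)) = f h"
    and bound: "\<And>u. u \<in> Lp_space M p \<Longrightarrow> Lp_norm_pow M p u \<le> 1 \<Longrightarrow>
                  Lp_norm_pow M p (pi_p \<pi>0 g u) \<le> ennreal s"
    and s: "s \<ge> 0"
  shows "Lp_mass M p f A \<le> s * Lp_mass M p f ((\<lambda>a. a + g) ` A)"
proof (rule le_mult_if_normalized_le[OF Lp_mass_nonneg Lp_mass_nonneg s])
  define B where "B = (\<lambda>a. a + g) ` A"
  fix t :: real
  assume t: "t > 0" and tB: "t * Lp_mass M p f ((\<lambda>a. a + g) ` A) \<le> 1"
  define c where "c = t powr (1 / p)"
  have c: "\<bar>c\<bar> powr p = t" using t p unfolding c_def by (simp add: powr_powr)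
  define u where "u x = c *\<^sub>R (indicator B x *\<^sub>R f x)" for x
  have u: "u \<in> Lp_space M p" "Lp_norm_pow M p u \<le> 1"
    unfolding u_def[abs_def] B_def
    using Lp_space_scaled_indicator[OF f p Ag, of c] Lp_norm_pow_scaled_indicator[OF f p Ag, of c] tB
    by (simp_all add: c)
  have ind: "indicator B (h + g) = (indicator A h :: real)" for h
    unfolding B_def by (auto simp: indicator_def)
  have "AE h in M. pi_p \<pi>0 g u h = c *\<^sub>R (indicator A h *\<^sub>R f h)"
    using inv by eventually_elim (simp add: pi_p_def u_def linear_scale[OF lin] ind)
  then have "Lp_norm_pow M p (pi_p \<pi>0 g u) = Lp_norm_pow M p (\<lambda>h. c *\<^sub>R (indicator A h *\<^sub>R f h))"
    unfolding Lp_norm_pow_def by (intro nn_integral_cong_AE) auto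
  also have "\<dots> = ennreal (t * Lp_mass M p f A)"
    unfolding Lp_norm_pow_scaled_indicator[OF f p A] c ..
  finally show "t * Lp_mass M p f A \<le> s"
    using bound[OF u] s by (simp add: ennreal_le_iff)
qed

lemma locally_compact_exhausting_compacts:
  assumes "locally_compact_space (euclidean :: 'a topology)"
  obtains K :: "nat \<Rightarrow> 'a::second_countable_topology set"
  where "\<And>n. compact (K n)" "incseq K" "(\<Union>n. K n) = UNIV"
proof -
  define F where "F = {U::'a set. open U \<and> (\<exists>C. compact C \<and> U \<subseteq> C)}"
  have cover: "\<Union>F = UNIV"
  proof -
    have "x \<in> \<Union>F" for x :: 'a
    proof -
      obtain U C where "openin euclidean U" "compactin euclidean C" "x \<in> U" "U \<subseteq> C"
        using assms unfolding locally_compact_space_def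
        by (metis UNIV_I compactin_euclidean_iff open_openin topspace_euclidean)
      then show ?thesis unfolding F_def by (auto simp: compactin_euclidean_iff)
    qed
    then show ?thesis by auto
  qed
  obtain F' where F': "F' \<subseteq> F" "countable F'" "\<Union>F' = \<Union>F"
    using Lindelof[of F] unfolding F_def by auto
  define e where "e = from_nat_into F'"
  have range_e: "range e = F'"
    using F' cover unfolding e_def by (intro range_from_nat_into) auto
  then have "\<forall>i. \<exists>C. compact C \<and> e i \<subseteq> C" using F' unfolding F_def by blast
  then obtain C where C: "\<And>i. compact (C i)" "\<And>i. e i \<subseteq> C i" by metis
  show ?thesis
  proof
    show "compact (\<Union>i\<le>n. C i)" for n using C by (intro compact_UN) auto
    show "incseq (\<lambda>n. \<Union>i\<le>n. C i)" unfolding incseq_def by (auto intro: order_trans)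
    have "UNIV = \<Union>(range e)" using range_e F' cover by auto
    also have "\<dots> \<subseteq> (\<Union>n. \<Union>i\<le>n. C i)" using C by fastforce
    finally show "(\<Union>n. \<Union>i\<le>n. C i) = UNIV" by auto
  qed
qed

lemma pi_p_bounded_uniform_bound:
  fixes M :: "'g::topological_group_add measure" and \<pi>0 :: "'g \<Rightarrow> 'v::banach \<Rightarrow> 'v"
  assumes "pi_p_bounded M p \<pi>0 \<xi>"
  obtains s where "s \<ge> 0"
    and "\<And>n u. n > 0 \<Longrightarrow> u \<in> Lp_space M p \<Longrightarrow> Lp_norm_pow M p u \<le> 1 \<Longrightarrow>
           Lp_norm_pow M p (pi_p \<pi>0 (gpow \<xi> n) u) \<le> ennreal s"
proof -
  define S where "S = (SUP n \<in> {0<..}. Lp_opnorm_pow M p \<pi>0 (gpow \<xi> n))"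
  have S: "ennreal (enn2real S) = S"
    using assms unfolding pi_p_bounded_def S_def by (intro ennreal_enn2real) auto
  have "Lp_norm_pow M p (pi_p \<pi>0 (gpow \<xi> n) u) \<le> S"
    if "n > 0" "u \<in> Lp_space M p" "Lp_norm_pow M p u \<le> 1" for n u
  proof -
    have "Lp_norm_pow M p (pi_p \<pi>0 (gpow \<xi> n) u) \<le> Lp_opnorm_pow M p \<pi>0 (gpow \<xi> n)"
      unfolding Lp_opnorm_pow_def using that by (auto intro!: SUP_upper)
    also have "\<dots> \<le> S"
      unfolding S_def using that(1) by (auto intro!: SUP_upper)
    finally show ?thesis .
  qed
  then show ?thesis
    using that[of "enn2real S"] by (simp add: S)
qed

lemma pi_p_bounded_translate_avoids:
  fixes \<xi> :: "'g::{topological_group_add, t2_space}"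
  assumes "pi_p_bounded M p \<pi>0 \<xi>" and "compact A" and "compact B"
  obtains n where "n > 0" and "\<forall>a\<in>A. a + gpow \<xi> n \<notin> B"
proof -
  define T where "T = (\<lambda>x. - fst x + snd x) ` (A \<times> B)"
  have "compact T"
    unfolding T_def using assms(2,3) by (intro compact_continuous_image compact_Times continuous_intros)
  moreover have "\<not> compact (closure {gpow \<xi> n | n. n > 0})"
    using assms(1) unfolding pi_p_bounded_def by simp
  ultimately have "\<not> {gpow \<xi> n | n. n > 0} \<subseteq> T"
    using closure_minimal compact_imp_closed closed_Int_compact[OF closed_closure]
    by (metis inf.absorb1)
  then obtain n where n: "n > 0" "gpow \<xi> n \<notin> T" by auto
  have "a + gpow \<xi> n \<notin> B" if "a \<in> A" for a
  proof
    assume "a + gpow \<xi> n \<in> B"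
    then have "- a + (a + gpow \<xi> n) \<in> T" unfolding T_def using that by force
    then show False using n(2) by (simp add: add.assoc[symmetric])
  qed
  then show ?thesis using n(1) that by blast
qed

lemma invariant_Lp_mass_le_outside:
  fixes M :: "'g::{topological_group_add, t2_space} measure"
    and \<pi>0 :: "'g \<Rightarrow> 'v::{banach, second_countable_topology} \<Rightarrow> 'v"
  assumes f: "f \<in> Lp_invariants M p \<pi>0" and p: "p > 0"
    and M: "sets M = sets borel" "space M = UNIV"
    and lin: "\<And>g. linear (\<pi>0 g)"
    and bounded: "pi_p_bounded M p \<pi>0 \<xi>"
    and s: "s \<ge> 0"
    and bound: "\<And>n u. n > 0 \<Longrightarrow> u \<in> Lp_space M p \<Longrightarrow> Lp_norm_pow M p u \<le> 1 \<Longrightarrow>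
                  Lp_norm_pow M p (pi_p \<pi>0 (gpow \<xi> n) u) \<le> ennreal s"
    and A: "compact A" and B: "compact B"
  shows "Lp_mass M p f A \<le> s * Lp_mass M p f (- B)"
proof -
  have fL: "f \<in> Lp_space M p" and inv: "\<And>g. AE h in M. \<pi>0 g (f (h + g)) = f h"
    using f by (auto simp: Lp_invariants_def pi_p_def)
  have sets: "compact S \<Longrightarrow> S \<in> sets M" for S using M(1) borel_compact by auto
  obtain n where n: "n > 0" "\<forall>a\<in>A. a + gpow \<xi> n \<notin> B"
    using pi_p_bounded_translate_avoids[OF bounded A B] .
  define g where "g = gpow \<xi> n"
  have Ag: "compact ((\<lambda>a. a + g) ` A)"
    using A by (intro compact_continuous_image continuous_intros)
  have bound_g: "Lp_norm_pow M p (pi_p \<pi>0 g u) \<le> ennreal s"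
    if "u \<in> Lp_space M p" "Lp_norm_pow M p u \<le> 1" for u
    using bound[OF n(1) that] unfolding g_def .
  have "Lp_mass M p f A \<le> s * Lp_mass M p f ((\<lambda>a. a + g) ` A)"
    by (rule Lp_mass_le_translate[OF fL p sets[OF A] sets[OF Ag] lin inv bound_g s])
  also have "\<dots> \<le> s * Lp_mass M p f (- B)"
  proof (intro mult_left_mono Lp_mass_mono[OF fL sets[OF Ag]])
    show "- B \<in> sets M"
      using sets.compl_sets[OF sets[OF B]] M(2) by (simp add: Compl_eq_Diff_UNIV)
  qed (use n(2) s in \<open>auto simp: g_def\<close>)
  finally show ?thesis .
qed

lemma AE_zero_if_Lp_mass_le_tails:
  assumes f: "f \<in> Lp_space M p" and p: "p > 0" and M: "space M = UNIV"
    and K: "\<And>j. K j \<in> sets M" "incseq K" "(\<Union>j. K j) = UNIV"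
    and le_tail: "\<And>m j. Lp_mass M p f (K m) \<le> s * Lp_mass M p f (- K j)"
  shows "AE x in M. f x = 0"
proof -
  have lim: "(\<lambda>j. Lp_mass M p f (K j)) \<longlonglongrightarrow> Lp_mass M p f UNIV"
    by (rule Lp_mass_exhaustion_tendsto[OF f K])
  have "Lp_mass M p f (K m) \<le> s * (Lp_mass M p f UNIV - Lp_mass M p f UNIV)" for m
  proof (rule LIMSEQ_le_const)
    show "(\<lambda>j. s * (Lp_mass M p f UNIV - Lp_mass M p f (K j)))
        \<longlonglongrightarrow> s * (Lp_mass M p f UNIV - Lp_mass M p f UNIV)"
      by (intro tendsto_intros lim)
    show "\<exists>N. \<forall>j\<ge>N. Lp_mass M p f (K m) \<le> s * (Lp_mass M p f UNIV - Lp_mass M p f (K j))"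
      using le_tail by (simp add: Lp_mass_Compl[OF f K(1) M])
  qed
  then have "Lp_mass M p f (K m) = 0" for m
    using Lp_mass_nonneg[of M p f "K m"] by (simp add: order_antisym)
  then have "Lp_mass M p f UNIV = 0"
    using lim by (simp add: LIMSEQ_const_iff)
  then have "AE x in M. norm (f x) powr p = 0"
    using f by (subst integral_nonneg_eq_0_iff_AE[symmetric]) (auto simp: Lp_mass_def Lp_space_def)
  then show ?thesis
    by eventually_elim (use p in simp)
qed

theorem corollary2:
  fixes M :: "'g::{topological_group_add, t2_space, second_countable_topology} measure"
    and \<pi>0 :: "'g \<Rightarrow> 'v::{banach, second_countable_topology} \<Rightarrow> 'v"
    and p :: real and \<xi> :: 'g
  assumes "locally_compact_space (euclidean :: 'g topology)"
    and "left_haar_measure M"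
    and "continuous_rep \<pi>0"
    and "p > 1"
    and "pi_p_bounded M p \<pi>0 \<xi>"
  shows "\<forall>f \<in> Lp_invariants M p \<pi>0. AE h in M. f h = 0"
proof
  fix f assume f: "f \<in> Lp_invariants M p \<pi>0"
  then have fL: "f \<in> Lp_space M p" by (simp add: Lp_invariants_def)
  have p: "p > 0" using assms(4) by simp
  have M: "sets M = sets borel" "space M = UNIV"
    using assms(2) by (auto simp: left_haar_measure_def)
  have lin: "\<And>g. linear (\<pi>0 g)"
    using assms(3) by (simp add: continuous_rep_def bounded_linear.linear)
  obtain s where s: "s \<ge> 0" "\<And>n u. n > 0 \<Longrightarrow> u \<in> Lp_space M p \<Longrightarrow> Lp_norm_pow M p u \<le> 1 \<Longrightarrow>
      Lp_norm_pow M p (pi_p \<pi>0 (gpow \<xi> n) u) \<le> ennreal s"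
    using pi_p_bounded_uniform_bound[OF assms(5)] by blast
  obtain K :: "nat \<Rightarrow> 'g set" where K: "\<And>n. compact (K n)" "incseq K" "(\<Union>n. K n) = UNIV"
    using locally_compact_exhausting_compacts[OF assms(1)] by blast
  have K_sets: "K n \<in> sets M" for n using K(1) M(1) borel_compact by auto
  show "AE h in M. f h = 0"
    using invariant_Lp_mass_le_outside[OF f p M lin assms(5) s K(1) K(1)]
    by (intro AE_zero_if_Lp_mass_le_tails[OF fL p M(2) K_sets K(2,3)])
qed

end
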